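(* Let $m,n,p,r$ be positive integers, let $\mathcal{A}:\mathbb{C}^{m\times n}\to\mathbb{C}^p$ be a linear operator with $\delta_{4r}(\mathcal{A})\le 0.04$, let $X_0\in\mathbb{C}^{m\times n}$ with $\mathrm{rank}(X_0)\le r$, let $\nu\in\mathbb{C}^p$, and let $b=\mathcal{A}X_0+\nu$. Let $(\widehat{X}_k)_{k\ge0}$ be any sequence of estimates produced by ADMiRA with input $(\mathcal{A},b,r)$. Then for each $k\ge0$, $$\|X_0-\widehat{X}_{k+1}\|_F\le 0.5\|X_0-\widehat{X}_k\|_F+6.5\|\nu\|_2,$$ and consequently $\|X_0-\widehat{X}_k\|_F\le 2^{-k}\|X_0\|_F+13\|\nu\|_2$ for all $k\ge0$.
   Context: $\mathbb{C}^p$ has inner product $\langle x,y\rangle=y^Hx$ and norm $\|\cdot\|_2$; $\mathbb{C}^{m\times n}$ has inner product $\langle X,Y\rangle=\mathrm{tr}(Y^HX)$ and Frobenius norm $\|\cdot\|_F$; $\mathcal{A}^*$ is the adjoint of $\mathcal{A}$. For $s\ge1$, $\delta_s(\mathcal{A})$ is the smallest $\delta\ge0$ such that $(1-\delta)\|X\|_F^2\le\|\mathcal{A}X\|_2^2\le(1+\delta)\|X\|_F^2$ for all $X$ with $\mathrm{rank}(X)\le s$. The set of atoms $\mathbb{O}$ is a set of unit-Frobenius-norm rank-one matrices such that every nonzero rank-one matrix is a scalar multiple of exactly one element of $\mathbb{O}$. For $\Psi\subset\mathbb{O}$, $\mathcal{P}_\Psi$ is the orthogonal projection onto $\mathrm{span}(\Psi)$.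 ADMiRA with input $(\mathcal{A},b,r)$: set $\widehat{X}_0=0$, $\widehat{\Psi}_0=\emptyset$; for $k=0,1,2,\dots$: (1) choose $\Psi'_{k+1}$ maximizing $\|\mathcal{P}_\Psi\mathcal{A}^*(b-\mathcal{A}\widehat{X}_k)\|_F$ over $\Psi\subset\mathbb{O}$, $|\Psi|\le 2r$; (2) $\widetilde{\Psi}_{k+1}=\Psi'_{k+1}\cup\widehat{\Psi}_k$; (3) $\widetilde{X}_{k+1}$ minimizes $\|b-\mathcal{A}X\|_2$ over $X\in\mathrm{span}(\widetilde{\Psi}_{k+1})$; (4) choose $\widehat{\Psi}_{k+1}$ maximizing $\|\mathcal{P}_\Psi\widetilde{X}_{k+1}\|_F$ over $\Psi\subset\mathbb{O}$, $|\Psi|\le r$; (5) $\widehat{X}_{k+1}=\mathcal{P}_{\widehat{\Psi}_{k+1}}\widetilde{X}_{k+1}$. *)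

theory Defs
  imports "HOL-Analysis.Analysis"
begin

text \<open>Complex m x n matrices are rendered as complex^'n^'m (rows indexed by 'm),
  vectors in C^p as complex^'p.  The library norm on these types is the
  Frobenius norm resp. the Euclidean 2-norm.\<close>

definition cmscale :: "complex \<Rightarrow> complex^'n^'m \<Rightarrow> complex^'n^'m" where
  "cmscale c X = (\<chi> i j. c * X$i$j)"

definition cvscale :: "complex \<Rightarrow> complex^'p \<Rightarrow> complex^'p" where
  "cvscale c v = (\<chi> i. c * v$i)"

definition vinner :: "complex^'p \<Rightarrow> complex^'p \<Rightarrow> complex" where
  "vinner x y = (\<Sum>i\<in>UNIV. x$i * cnj (y$i))"

definition minner :: "complex^'n^'m \<Rightarrow> complex^'n^'m \<Rightarrow> complex" where
  "minner X Y = (\<Sum>i\<in>UNIV. \<Sum>j\<in>UNIV. X$i$j * cnj (Y$i$j))"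

definition clinear_op :: "(complex^'n^'m \<Rightarrow> complex^'p) \<Rightarrow> bool" where
  "clinear_op A \<longleftrightarrow> (\<forall>X Y. A (X + Y) = A X + A Y) \<and> (\<forall>c X. A (cmscale c X) = cvscale c (A X))"

definition adjoint_op :: "(complex^'n^'m \<Rightarrow> complex^'p) \<Rightarrow> complex^'p \<Rightarrow> complex^'n^'m" where
  "adjoint_op A y = (THE Z. \<forall>X. vinner (A X) y = minner X Z)"

definition cspan :: "(complex^'n^'m) set \<Rightarrow> (complex^'n^'m) set" where
  "cspan S = {X. \<exists>T c. finite T \<and> T \<subseteq> S \<and> X = (\<Sum>a\<in>T. cmscale (c a) a)}"

definition proj_span :: "(complex^'n^'m) set \<Rightarrow> complex^'n^'m \<Rightarrow> complex^'n^'m" where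
  "proj_span Psi X = (THE Y. Y \<in> cspan Psi \<and> (\<forall>Z\<in>cspan Psi. minner (X - Y) Z = 0))"

definition rip_const :: "(complex^'n^'m \<Rightarrow> complex^'p) \<Rightarrow> nat \<Rightarrow> real" where
  "rip_const A s = Inf {\<delta>. \<delta> \<ge> 0 \<and> (\<forall>X::complex^'n^'m. rank X \<le> s \<longrightarrow>
      (1 - \<delta>) * (norm X)\<^sup>2 \<le> (norm (A X))\<^sup>2 \<and> (norm (A X))\<^sup>2 \<le> (1 + \<delta>) * (norm X)\<^sup>2)}"

definition atom_set :: "(complex^'n^'m) set \<Rightarrow> bool" where
  "atom_set Atoms \<longleftrightarrow> (\<forall>a\<in>Atoms. norm a = 1 \<and> rank a = 1) \<and>
     (\<forall>X::complex^'n^'m. rank X = 1 \<longrightarrow> (\<exists>!a. a \<in> Atoms \<and> (\<exists>c. X = cmscale c a)))"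

text \<open>Xh k = \<widehat>X_k, Ph k = \<widehat>\<Psi>_k, Pp (Suc k) = \<Psi>'_{k+1},
  Pt (Suc k) = \<widetilde>\<Psi>_{k+1}, Xt (Suc k) = \<widetilde>X_{k+1}.\<close>
definition admira_run ::
  "(complex^'n^'m) set \<Rightarrow> (complex^'n^'m \<Rightarrow> complex^'p) \<Rightarrow> complex^'p \<Rightarrow> nat \<Rightarrow>
   (nat \<Rightarrow> complex^'n^'m) \<Rightarrow> (nat \<Rightarrow> (complex^'n^'m) set) \<Rightarrow>
   (nat \<Rightarrow> (complex^'n^'m) set) \<Rightarrow> (nat \<Rightarrow> (complex^'n^'m) set) \<Rightarrow>
   (nat \<Rightarrow> complex^'n^'m) \<Rightarrow> bool" where
  "admira_run Atoms A b r Xh Ph Pp Pt Xt \<longleftrightarrow>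
     Xh 0 = 0 \<and> Ph 0 = {} \<and>
     (\<forall>k.
       \<comment> \<open>step 1\<close>
       (Pp (Suc k) \<subseteq> Atoms \<and> finite (Pp (Suc k)) \<and> card (Pp (Suc k)) \<le> 2 * r \<and>
        (\<forall>Psi. Psi \<subseteq> Atoms \<and> finite Psi \<and> card Psi \<le> 2 * r \<longrightarrow>
           norm (proj_span Psi (adjoint_op A (b - A (Xh k))))
             \<le> norm (proj_span (Pp (Suc k)) (adjoint_op A (b - A (Xh k)))))) \<and>
       \<comment> \<open>step 2\<close>
       Pt (Suc k) = Pp (Suc k) \<union> Ph k \<and>
       \<comment> \<open>step 3\<close>
       (Xt (Suc k) \<in> cspan (Pt (Suc k)) \<and>
        (\<forall>X\<in>cspan (Pt (Suc k)). norm (b - A (Xt (Suc k))) \<le> norm (b - A X))) \<and>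
       \<comment> \<open>step 4\<close>
       (Ph (Suc k) \<subseteq> Atoms \<and> finite (Ph (Suc k)) \<and> card (Ph (Suc k)) \<le> r \<and>
        (\<forall>Psi. Psi \<subseteq> Atoms \<and> finite Psi \<and> card Psi \<le> r \<longrightarrow>
           norm (proj_span Psi (Xt (Suc k))) \<le> norm (proj_span (Ph (Suc k)) (Xt (Suc k))))) \<and>
       \<comment> \<open>step 5\<close>
       Xh (Suc k) = proj_span (Ph (Suc k)) (Xt (Suc k)))"

end

theory Submission
  imports Defs
begin

text \<open>Write \<open>D = X\<^sub>0 - Xh k\<close>. On the span of at most \<open>4 r\<close> atoms, \<open>A\<close> is a near-isometry
  with constant \<open>\<delta>\<close>, hence by polarization \<open>\<bar>\<langle>A X, A Y\<rangle> - \<langle>X, Y\<rangle>\<bar> \<le> \<delta> \<parallel>X\<parallel> \<parallel>Y\<parallel>\<close> there.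
  Projected onto a \<open>4 r\<close>-atom span containing the atoms of \<open>D\<close> and the newly selected ones, the
  proxy \<open>A\<^sup>* (b - A (Xh k))\<close> is within \<open>\<delta> \<parallel>D\<parallel> + \<surd>(1 + \<delta>) \<parallel>\<nu>\<parallel>\<close> of \<open>D\<close>. The selected \<open>2 r\<close> atoms
  capture at least as much of the proxy as the atoms of \<open>D\<close>, so the merged support misses at most
  twice that much of \<open>X\<^sub>0\<close>. Least squares on the merged support costs a factor \<open>1 / (1 - \<delta>)\<close>
  plus noise, and pruning to the best \<open>r\<close> atoms at most doubles the error. Altogether
  \<open>\<parallel>X\<^sub>0 - Xh (k + 1)\<parallel> \<le> (4 \<delta> \<parallel>D\<parallel> + 6 \<surd>(1 + \<delta>) \<parallel>\<nu>\<parallel>) / (1 - \<delta>)\<close>, which for \<open>\<delta> = 0.04\<close> is the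
  contraction; iterating it gives the geometric bound.\<close>

section \<open>Complex scalars and the adjoint\<close>

lemma cmscale_of_real: "cmscale (complex_of_real c) X = c *\<^sub>R X"
  by (auto simp: cmscale_def vec_eq_iff complex_eq_iff)

lemma cvscale_of_real: "cvscale (complex_of_real c) v = c *\<^sub>R v"
  by (auto simp: cvscale_def vec_eq_iff complex_eq_iff)

lemma cmscale_0_left [simp]: "cmscale 0 X = 0"
  by (simp add: cmscale_def vec_eq_iff)

lemma cmscale_1_left [simp]: "cmscale 1 X = X"
  by (simp add: cmscale_def vec_eq_iff)

lemma cmscale_add_left: "cmscale (c + d) X = cmscale c X + cmscale d X"
  by (simp add: cmscale_def vec_eq_iff algebra_simps)

lemma cmscale_cmscale: "cmscale c (cmscale d X) = cmscale (c * d) X"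
  by (simp add: cmscale_def vec_eq_iff)

lemma cmscale_sum: "cmscale c (sum f S) = (\<Sum>x\<in>S. cmscale c (f x))"
  by (simp add: cmscale_def vec_eq_iff sum_distrib_left)

lemma cmscale_nth: "cmscale c X $ i = c *s X $ i"
  by (simp add: cmscale_def vec_eq_iff)

lemma Re_minner: "Re (minner X Y) = X \<bullet> Y"
  by (simp add: minner_def inner_vec_def inner_complex_def Re_sum)

lemma Re_vinner: "Re (vinner x y) = x \<bullet> y"
  by (simp add: vinner_def inner_vec_def inner_complex_def Re_sum)

lemma minner_cmscale_left: "minner (cmscale c X) Y = c * minner X Y"
  by (simp add: minner_def cmscale_def sum_distrib_left algebra_simps)

lemma minner_cmscale_right: "minner X (cmscale c Y) = cnj c * minner X Y"
  by (simp add: minner_def cmscale_def sum_distrib_left algebra_simps)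

lemma vinner_cvscale_left: "vinner (cvscale c x) y = c * vinner x y"
  by (simp add: vinner_def cvscale_def sum_distrib_left algebra_simps)

lemma clinear_op_linear: "clinear_op A \<Longrightarrow> linear A"
  by (rule linearI) (simp_all add: clinear_op_def flip: cmscale_of_real cvscale_of_real)

text \<open>The imaginary part of a complex inner product is the real part after multiplying the
  first argument by \<open>-\<i>\<close>, so the real adjoint already satisfies the complex adjoint equation.\<close>
lemma adjoint_op_eq_adjoint:
  fixes A :: "complex^'n^'m \<Rightarrow> complex^'p"
  assumes "clinear_op A"
  shows "adjoint_op A y = adjoint A y"
proof -
  have lin: "linear A" using assms by (rule clinear_op_linear)
  have adj: "vinner (A X) y = minner X (adjoint A y)" for X
  proof (rule complex_eqI)
    show "Re (vinner (A X) y) = Re (minner X (adjoint A y))"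
      by (simp add: Re_vinner Re_minner adjoint_works[OF lin])
    have "Im (vinner (A X) y) = Re (vinner (A (cmscale (- \<i>) X)) y)"
      using assms by (simp add: clinear_op_def vinner_cvscale_left)
    also have "\<dots> = Re (minner (cmscale (- \<i>) X) (adjoint A y))"
      by (simp add: Re_vinner Re_minner adjoint_works[OF lin])
    also have "\<dots> = Im (minner X (adjoint A y))"
      by (simp add: minner_cmscale_left)
    finally show "Im (vinner (A X) y) = Im (minner X (adjoint A y))" .
  qed
  show ?thesis unfolding adjoint_op_def
  proof (rule the_equality)
    fix Z assume "\<forall>X. vinner (A X) y = minner X Z"
    then have "X \<bullet> Z = X \<bullet> adjoint A y" for X
      using adj by (metis Re_minner)
    then have "(Z - adjoint A y) \<bullet> (Z - adjoint A y) = 0"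
      by (simp add: inner_diff_right)
    then show "Z = adjoint A y" by simp
  qed (use adj in blast)
qed

lemma inner_adjoint_op:
  fixes A :: "complex^'n^'m \<Rightarrow> complex^'p"
  assumes "clinear_op A"
  shows "X \<bullet> adjoint_op A y = A X \<bullet> y"
  using adjoint_works[OF clinear_op_linear[OF assms]] by (simp add: adjoint_op_eq_adjoint[OF assms])

section \<open>Spans of atoms and orthogonal projections\<close>

lemma cspan_mono: "S \<subseteq> T \<Longrightarrow> cspan S \<subseteq> cspan T"
  unfolding cspan_def by blast

lemma cspan_superset: "a \<in> S \<Longrightarrow> a \<in> cspan S"
  unfolding cspan_def by (intro CollectI exI[of _ "{a}"] exI[of _ "\<lambda>_. 1"]) simp

lemma in_cspan_iff:
  assumes "finite S"
  shows "X \<in> cspan S \<longleftrightarrow> (\<exists>c. X = (\<Sum>a\<in>S. cmscale (c a) a))"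
proof
  assume "X \<in> cspan S"
  then obtain T c where T: "finite T" "T \<subseteq> S" "X = (\<Sum>a\<in>T. cmscale (c a) a)"
    unfolding cspan_def by blast
  define c' where "c' a = (if a \<in> T then c a else 0)" for a
  have "(\<Sum>a\<in>S. cmscale (c' a) a) = (\<Sum>a\<in>T. cmscale (c' a) a)"
    by (rule sum.mono_neutral_right) (use assms T in \<open>auto simp: c'_def\<close>)
  also have "\<dots> = X" using T by (simp add: c'_def)
  finally show "\<exists>c. X = (\<Sum>a\<in>S. cmscale (c a) a)" by metis
next
  assume "\<exists>c. X = (\<Sum>a\<in>S. cmscale (c a) a)"
  then show "X \<in> cspan S" unfolding cspan_def using assms by blast
qed

lemma cspan_cmscale:
  assumes "finite S" "X \<in> cspan S"
  shows "cmscale k X \<in> cspan S"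
proof -
  obtain c where "X = (\<Sum>a\<in>S. cmscale (c a) a)"
    using assms(2) unfolding in_cspan_iff[OF assms(1)] ..
  then have "cmscale k X = (\<Sum>a\<in>S. cmscale (k * c a) a)"
    by (simp add: cmscale_sum cmscale_cmscale)
  then show ?thesis unfolding in_cspan_iff[OF assms(1)] by (intro exI[of _ "\<lambda>a. k * c a"])
qed

lemma subspace_cspan:
  assumes "finite S"
  shows "subspace (cspan S)"
  unfolding subspace_def
proof (intro conjI ballI allI)
  show "0 \<in> cspan S"
    unfolding in_cspan_iff[OF assms] by (intro exI[of _ "\<lambda>_. 0"]) simp
  fix X Y assume "X \<in> cspan S" "Y \<in> cspan S"
  then obtain c d where "X = (\<Sum>a\<in>S. cmscale (c a) a)" "Y = (\<Sum>a\<in>S. cmscale (d a) a)"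
    unfolding in_cspan_iff[OF assms] by blast
  then have "X + Y = (\<Sum>a\<in>S. cmscale (c a + d a) a)"
    by (simp add: cmscale_add_left sum.distrib)
  then show "X + Y \<in> cspan S"
    unfolding in_cspan_iff[OF assms] by (intro exI[of _ "\<lambda>a. c a + d a"])
next
  fix t :: real and X assume "X \<in> cspan S"
  then show "t *\<^sub>R X \<in> cspan S"
    using cspan_cmscale[OF assms, of X "complex_of_real t"] by (simp add: cmscale_of_real)
qed

text \<open>In \<open>proj_span\<close>, orthogonality is with respect to the complex inner product; since
  \<open>cspan S\<close> is closed under multiplication by \<open>\<i>\<close>, this is the same as orthogonality with
  respect to its real part \<open>\<bullet>\<close>.\<close>
lemma proj_span:
  assumes "finite S"
  shows "proj_span S X \<in> cspan S" and "Z \<in> cspan S \<Longrightarrow> (X - proj_span S X) \<bullet> Z = 0"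
proof -
  have sub: "subspace (cspan S)" using assms by (rule subspace_cspan)
  then have sp: "span (cspan S) = cspan S" by (simp add: span_eq_iff)
  obtain Y W where Y: "Y \<in> cspan S" and W: "\<And>Z. Z \<in> cspan S \<Longrightarrow> W \<bullet> Z = 0"
    and XYW: "X = Y + W"
    using orthogonal_subspace_decomp_exists[of "cspan S" X] by (auto simp: sp orthogonal_def)
  have "proj_span S X = Y"
    unfolding proj_span_def
  proof (rule the_equality)
    show "Y \<in> cspan S \<and> (\<forall>Z\<in>cspan S. minner (X - Y) Z = 0)"
    proof (intro conjI ballI Y complex_eqI)
      fix Z assume Z: "Z \<in> cspan S"
      show "Re (minner (X - Y) Z) = Re 0" using W[OF Z] XYW by (simp add: Re_minner)
      have "Im (minner (X - Y) Z) = Re (minner (X - Y) (cmscale \<i> Z))"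
        by (simp add: minner_cmscale_right)
      also have "\<dots> = 0" using W[OF cspan_cmscale[OF assms Z]] XYW by (simp add: Re_minner)
      finally show "Im (minner (X - Y) Z) = Im 0" by simp
    qed
  next
    fix Y' assume Y': "Y' \<in> cspan S \<and> (\<forall>Z\<in>cspan S. minner (X - Y') Z = 0)"
    have d: "Y - Y' \<in> cspan S" using Y Y' sub by (simp add: subspace_diff)
    have "(X - Y') \<bullet> (Y - Y') = 0" using Y' d by (metis Re_minner zero_complex.sel(1))
    then have "(Y - Y') \<bullet> (Y - Y') = 0"
      using W[OF d] XYW by (simp add: inner_diff_left inner_add_left)
    then show "Y' = Y" by simp
  qed
  then show "proj_span S X \<in> cspan S" and "Z \<in> cspan S \<Longrightarrow> (X - proj_span S X) \<bullet> Z = 0"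
    using Y W XYW by simp_all
qed

lemma proj_span_unique:
  assumes "finite S" "Y \<in> cspan S" "\<And>Z. Z \<in> cspan S \<Longrightarrow> (X - Y) \<bullet> Z = 0"
  shows "proj_span S X = Y"
proof -
  have d: "proj_span S X - Y \<in> cspan S"
    using proj_span(1)[OF assms(1)] assms(2) subspace_cspan[OF assms(1)] by (simp add: subspace_diff)
  have "(X - Y) \<bullet> (proj_span S X - Y) - (X - proj_span S X) \<bullet> (proj_span S X - Y) = 0"
    using assms(3)[OF d] proj_span(2)[OF assms(1) d] by simp
  then have "(proj_span S X - Y) \<bullet> (proj_span S X - Y) = 0"
    by (simp add: inner_diff_left inner_diff_right algebra_simps)
  then show ?thesis by simp
qed

lemma proj_span_proj_span:
  assumes "finite S" "finite T" "S \<subseteq> T"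
  shows "proj_span S (proj_span T X) = proj_span S X"
proof (rule proj_span_unique[OF assms(1) proj_span(1)[OF assms(1)]])
  fix Z assume Z: "Z \<in> cspan S"
  then have "Z \<in> cspan T" using cspan_mono[OF assms(3)] by blast
  then show "(proj_span T X - proj_span S X) \<bullet> Z = 0"
    using proj_span(2)[OF assms(1) Z, of X] proj_span(2)[of T Z X] assms(2)
    by (simp add: inner_diff_left)
qed

lemma norm_proj_span_pythagoras:
  assumes "finite S"
  shows "(norm (X - proj_span S X))\<^sup>2 = (norm X)\<^sup>2 - (norm (proj_span S X))\<^sup>2"
proof -
  have "orthogonal (proj_span S X) (X - proj_span S X)"
    using proj_span[OF assms] by (simp add: orthogonal_def inner_commute)
  from norm_add_Pythagorean[OF this] show ?thesis by simp
qed

lemma proj_span_best_approx: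
  assumes "finite S" "Y \<in> cspan S"
  shows "norm (X - proj_span S X) \<le> norm (X - Y)"
proof -
  have "proj_span S X - Y \<in> cspan S"
    using proj_span(1)[OF assms(1)] assms(2) subspace_cspan[OF assms(1)] by (simp add: subspace_diff)
  then have "orthogonal (X - proj_span S X) (proj_span S X - Y)"
    using proj_span(2)[OF assms(1)] by (simp add: orthogonal_def)
  from norm_add_Pythagorean[OF this]
  have "(norm (X - proj_span S X))\<^sup>2 \<le> (norm (X - Y))\<^sup>2" by simp
  then show ?thesis by (simp add: power_mono_iff)
qed

lemma proj_span_residual_le:
  assumes "finite H" "finite V" "norm (proj_span V T) \<le> norm (proj_span H T)" "X \<in> cspan V"
  shows "norm (T - proj_span H T) \<le> norm (T - X)"
proof -
  have "(norm (T - proj_span H T))\<^sup>2 \<le> (norm (T - proj_span V T))\<^sup>2"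
    using assms(3) by (simp add: norm_proj_span_pythagoras assms(1,2) power_mono)
  then have "norm (T - proj_span H T) \<le> norm (T - proj_span V T)"
    by (simp add: power_mono_iff)
  also have "\<dots> \<le> norm (T - X)" using assms(2,4) by (rule proj_span_best_approx)
  finally show ?thesis .
qed

lemma proj_span_pruning_error:
  assumes "finite H" "finite V" "norm (proj_span V T) \<le> norm (proj_span H T)" "X \<in> cspan V"
  shows "norm (X - proj_span H T) \<le> 2 * norm (X - T)"
  using norm_triangle_ineq[of "X - T" "T - proj_span H T"]
    proj_span_residual_le[OF assms] by (simp add: norm_minus_commute)

lemma proj_span_selection_error:
  assumes "finite W" "finite V" "finite Z" "W \<union> V \<subseteq> Z"
    and "norm (proj_span V E) \<le> norm (proj_span W E)" and "D \<in> cspan V"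
  shows "norm (D - proj_span W D) \<le> 2 * norm (proj_span Z E - D)"
proof -
  let ?F = "proj_span Z E"
  have "W \<subseteq> Z" "V \<subseteq> Z" using assms(4) by auto
  then have "norm (proj_span V ?F) \<le> norm (proj_span W ?F)"
    using assms(5) by (simp add: proj_span_proj_span assms(1-3))
  then have "norm (?F - proj_span W ?F) \<le> norm (?F - D)"
    by (rule proj_span_residual_le[OF assms(1,2) _ assms(6)])
  moreover have "norm (D - proj_span W D) \<le> norm (D - proj_span W ?F)"
    using assms(1) proj_span(1)[OF assms(1)] by (rule proj_span_best_approx)
  moreover have "norm (D - proj_span W ?F) \<le> norm (?F - D) + norm (?F - proj_span W ?F)"
    using norm_triangle_ineq[of "D - ?F" "?F - proj_span W ?F"] by (simp add: norm_minus_commute)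
  ultimately show ?thesis by linarith
qed

section \<open>Low-rank matrices as combinations of atoms\<close>

lemma row_eq_nth: "row i X = X $ i"
  by (simp add: row_def vec_eq_iff)

lemma rank_eq_0_imp_zero:
  fixes X :: "'a::field^'n^'m"
  assumes "rank X = 0"
  shows "X = 0"
proof -
  have "rows X \<subseteq> {0}" using assms unfolding row_rank_def_gen by simp
  then have "X $ i = 0" for i by (auto simp: rows_def row_eq_nth)
  then show ?thesis by (simp add: vec_eq_iff)
qed

lemma rank_cspan_le_card:
  fixes X :: "complex^'n^'m"
  assumes "finite S" "\<forall>a\<in>S. rank a \<le> 1" "X \<in> cspan S"
  shows "rank X \<le> card S"
proof -
  obtain c where X: "X = (\<Sum>a\<in>S. cmscale (c a) a)"
    using assms(3) unfolding in_cspan_iff[OF assms(1)] ..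
  have "\<forall>a. \<exists>B. vec.independent B \<and> rows a \<subseteq> vec.span B \<and> card B = vec.dim (rows (a::complex^'n^'m))"
    by (metis vec.basis_exists)
  then obtain B where B: "\<And>a. vec.independent (B a)" "\<And>a. rows a \<subseteq> vec.span (B a)"
    "\<And>a. card (B a) = vec.dim (rows (a::complex^'n^'m))"
    by metis
  define U where "U = \<Union> (B ` S)"
  have finU: "finite U"
    unfolding U_def using assms(1) B(1) vec.finiteI_independent by blast
  have "card U \<le> (\<Sum>a\<in>S. card (B a))" unfolding U_def by (rule card_UN_le[OF assms(1)])
  also have "\<dots> \<le> (\<Sum>a\<in>S. 1)"
    by (rule sum_mono) (use B(3) assms(2) in \<open>auto simp: row_rank_def_gen\<close>)
  finally have "card U \<le> card S" by simp
  have "rows a \<subseteq> vec.span U" if "a \<in> S" for a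
    using B(2)[of a] vec.span_mono[of "B a" U] that by (auto simp: U_def)
  then have "rows X \<subseteq> vec.span U"
    by (auto simp: rows_def row_eq_nth X cmscale_nth intro!: vec.span_sum vec.span_scale)
  then have "rank X \<le> card U" unfolding row_rank_def_gen by (rule vec.dim_le_card[OF _ finU])
  with \<open>card U \<le> card S\<close> show ?thesis by simp
qed

text \<open>Expanding each row in a basis of the row space writes a matrix of rank at most \<open>r\<close>
  as a sum of at most \<open>r\<close> matrices whose rows are multiples of a single basis vector.\<close>
lemma sum_of_rank_le_1:
  fixes X :: "'a::field^'n^'m"
  assumes "rank X \<le> r"
  shows "\<exists>(B :: ('a^'n) set) M. finite B \<and> card B \<le> r \<and> (\<forall>b. rank (M b) \<le> 1) \<and> X = (\<Sum>b\<in>B. M b)"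
proof -
  obtain B where B: "vec.independent B" "rows X \<subseteq> vec.span B" "card B = vec.dim (rows X)"
    by (metis vec.basis_exists)
  have finB: "finite B" using B(1) vec.finiteI_independent by blast
  have "\<exists>u. X $ i = (\<Sum>v\<in>B. u v *s v)" for i
  proof -
    have "X $ i \<in> rows X" by (auto simp: rows_def row_eq_nth)
    then have "X $ i \<in> range (\<lambda>u. \<Sum>v\<in>B. u v *s v)"
      using B(2) vec.span_finite[OF finB] by blast
    then show ?thesis by auto
  qed
  then obtain u where u: "\<And>i. X $ i = (\<Sum>v\<in>B. u i v *s v)" by metis
  define M where "M b = (\<chi> i. u i b *s b)" for b
  have "rank (M b) \<le> 1" for b
  proof -
    have "rows (M b) \<subseteq> vec.span {b}"
      by (auto simp: rows_def row_eq_nth M_def vec.span_scale vec.span_base)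
    then have "vec.dim (rows (M b)) \<le> card {b}" by (rule vec.dim_le_card) simp
    then show ?thesis by (simp add: row_rank_def_gen)
  qed
  moreover have "X = (\<Sum>b\<in>B. M b)" by (simp add: vec_eq_iff M_def u)
  moreover have "card B \<le> r" using B(3) assms by (simp add: row_rank_def_gen)
  ultimately show ?thesis using finB by blast
qed

lemma low_rank_in_cspan_atoms:
  fixes X :: "complex^'n^'m"
  assumes atoms: "atom_set Atoms" and rank: "rank X \<le> r"
  shows "\<exists>Psi. Psi \<subseteq> Atoms \<and> finite Psi \<and> card Psi \<le> r \<and> X \<in> cspan Psi"
proof -
  obtain B :: "(complex^'n) set" and M
    where B: "finite B" "card B \<le> r" and M: "\<And>b. rank (M b) \<le> 1"
    and X: "X = (\<Sum>b\<in>B. M b)"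
    using sum_of_rank_le_1[OF rank] by blast
  have "\<exists>a c. M b \<noteq> 0 \<longrightarrow> a \<in> Atoms \<and> M b = cmscale c a" for b
  proof (cases "M b = 0")
    case False
    then have "rank (M b) \<noteq> 0" using rank_eq_0_imp_zero by blast
    then have "rank (M b) = 1" using M[of b] by simp
    then show ?thesis using atoms unfolding atom_set_def by metis
  qed simp
  then obtain atom coef where atom: "\<And>b. M b \<noteq> 0 \<Longrightarrow> atom b \<in> Atoms \<and> M b = cmscale (coef b) (atom b)"
    by metis
  define Psi where "Psi = atom ` {b\<in>B. M b \<noteq> 0}"
  have finPsi: "finite Psi" unfolding Psi_def using B(1) by simp
  have "card Psi \<le> card {b\<in>B. M b \<noteq> 0}" unfolding Psi_def using B(1) by (simp add: card_image_le)
  also have "\<dots> \<le> card B" using B(1) by (rule card_mono) auto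
  finally have "card Psi \<le> card B" .
  moreover have "M b \<in> cspan Psi" if "b \<in> B" for b
  proof (cases "M b = 0")
    case True
    then show ?thesis using subspace_0[OF subspace_cspan[OF finPsi]] by simp
  next
    case False
    then have "atom b \<in> Psi" unfolding Psi_def using that by auto
    then show ?thesis using atom[OF False] cspan_cmscale[OF finPsi cspan_superset] by simp
  qed
  then have "X \<in> cspan Psi"
    unfolding X by (rule subspace_sum[OF subspace_cspan[OF finPsi]])
  moreover have "Psi \<subseteq> Atoms" unfolding Psi_def using atom by auto
  ultimately show ?thesis using finPsi B(2) by (meson le_trans)
qed

section \<open>Near-isometries\<close>

definition near_isometric_on :: "('a::real_normed_vector \<Rightarrow> 'b::real_normed_vector) \<Rightarrow> 'a set \<Rightarrow> real \<Rightarrow> bool"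
  where "near_isometric_on A S d \<longleftrightarrow> (\<forall>V\<in>S. \<bar>(norm (A V))\<^sup>2 - (norm V)\<^sup>2\<bar> \<le> d * (norm V)\<^sup>2)"

text \<open>\<open>rip_const\<close> is an infimum, so the bound needs the set of admissible constants to be
  nonempty; it is, because \<open>A\<close> is bounded.\<close>
lemma rip_const_bound:
  fixes A :: "complex^'n^'m \<Rightarrow> complex^'p"
  assumes "clinear_op A" "rank X \<le> s"
  shows "\<bar>(norm (A X))\<^sup>2 - (norm X)\<^sup>2\<bar> \<le> rip_const A s * (norm X)\<^sup>2"
proof -
  define D where "D = {\<delta>. \<delta> \<ge> 0 \<and> (\<forall>X::complex^'n^'m. rank X \<le> s \<longrightarrow>
      (1 - \<delta>) * (norm X)\<^sup>2 \<le> (norm (A X))\<^sup>2 \<and> (norm (A X))\<^sup>2 \<le> (1 + \<delta>) * (norm X)\<^sup>2)}"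
  have lin: "linear A" using assms(1) by (rule clinear_op_linear)
  obtain K where K: "\<And>X. norm (A X) \<le> norm X * K"
    using lin linear_conv_bounded_linear bounded_linear.bounded by blast
  have "K\<^sup>2 + 1 \<in> D"
  proof -
    have "(norm (A X))\<^sup>2 \<le> (1 + (K\<^sup>2 + 1)) * (norm X)\<^sup>2" for X
    proof -
      have "(norm (A X))\<^sup>2 \<le> (norm X * K)\<^sup>2" using K[of X] by (simp add: power_mono)
      also have "\<dots> \<le> (1 + (K\<^sup>2 + 1)) * (norm X)\<^sup>2" by (simp add: power_mult_distrib algebra_simps)
      finally show ?thesis .
    qed
    moreover have "(1 - (K\<^sup>2 + 1)) * (norm X)\<^sup>2 \<le> (norm (A X))\<^sup>2" for X :: "complex^'n^'m"
      by (rule order_trans[of _ 0]) (simp_all add: mult_nonpos_nonneg)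
    ultimately show ?thesis unfolding D_def by simp
  qed
  then have "D \<noteq> {}" by blast
  show ?thesis
  proof (cases "X = 0")
    case False
    then have N: "(norm X)\<^sup>2 > 0" by simp
    have "\<bar>(norm (A X))\<^sup>2 - (norm X)\<^sup>2\<bar> / (norm X)\<^sup>2 \<le> \<delta>" if "\<delta> \<in> D" for \<delta>
      using that assms(2) N by (auto simp: D_def divide_le_eq abs_le_iff algebra_simps)
    then have "\<bar>(norm (A X))\<^sup>2 - (norm X)\<^sup>2\<bar> / (norm X)\<^sup>2 \<le> Inf D"
      using \<open>D \<noteq> {}\<close> by (rule cInf_greatest[rotated])
    then show ?thesis using N by (simp add: rip_const_def D_def divide_le_eq)
  qed (simp add: linear_0[OF lin])
qed

lemma near_isometric_on_cspan_atoms: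
  fixes A :: "complex^'n^'m \<Rightarrow> complex^'p"
  assumes "clinear_op A" "rip_const A s \<le> d" "atom_set Atoms"
    and "S \<subseteq> Atoms" "finite S" "card S \<le> s"
  shows "near_isometric_on A (cspan S) d"
  unfolding near_isometric_on_def
proof
  fix V assume "V \<in> cspan S"
  then have "rank V \<le> card S"
    using assms(3-5) by (intro rank_cspan_le_card) (auto simp: atom_set_def)
  then have "\<bar>(norm (A V))\<^sup>2 - (norm V)\<^sup>2\<bar> \<le> rip_const A s * (norm V)\<^sup>2"
    using assms(1,6) by (intro rip_const_bound) auto
  also have "\<dots> \<le> d * (norm V)\<^sup>2" using assms(2) by (simp add: mult_right_mono)
  finally show "\<bar>(norm (A V))\<^sup>2 - (norm V)\<^sup>2\<bar> \<le> d * (norm V)\<^sup>2" .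
qed

lemma near_isometric_on_norm_le:
  assumes "near_isometric_on A S d" "V \<in> S"
  shows "norm (A V) \<le> sqrt (1 + d) * norm V"
proof -
  have "(norm (A V))\<^sup>2 \<le> (1 + d) * (norm V)\<^sup>2"
    using assms unfolding near_isometric_on_def by (auto simp: abs_le_iff algebra_simps)
  then have "norm (A V) \<le> sqrt ((1 + d) * (norm V)\<^sup>2)" by (rule real_le_rsqrt)
  then show ?thesis by (simp add: real_sqrt_mult)
qed

text \<open>Polarization: \<open>4 (A X \<bullet> A Y - X \<bullet> Y)\<close> is the difference of the distortions of
  \<open>\<parallel>A (X + Y)\<parallel>\<^sup>2\<close> and \<open>\<parallel>A (X - Y)\<parallel>\<^sup>2\<close>, which the parallelogram law bounds.\<close>
lemma near_isometric_on_polarization: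
  fixes A :: "'a::real_inner \<Rightarrow> 'b::real_inner"
  assumes "linear A" "subspace S" "near_isometric_on A S d" "X \<in> S" "Y \<in> S"
  shows "\<bar>A X \<bullet> A Y - X \<bullet> Y\<bar> \<le> d * ((norm X)\<^sup>2 + (norm Y)\<^sup>2) / 2"
proof -
  define h where "h V = (norm (A V))\<^sup>2 - (norm V)\<^sup>2" for V
  have "X + Y \<in> S" "X - Y \<in> S" using assms(2,4,5) by (auto simp: subspace_add subspace_diff)
  then have h: "\<bar>h (X + Y)\<bar> \<le> d * (norm (X + Y))\<^sup>2" "\<bar>h (X - Y)\<bar> \<le> d * (norm (X - Y))\<^sup>2"
    using assms(3) by (auto simp: near_isometric_on_def h_def)
  have polar: "h (X + Y) - h (X - Y) = 4 * (A X \<bullet> A Y - X \<bullet> Y)"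
    unfolding h_def linear_add[OF assms(1)] linear_diff[OF assms(1)] power2_norm_eq_inner
    by (simp add: inner_add_left inner_add_right inner_diff_left inner_diff_right inner_commute)
  have "4 * \<bar>A X \<bullet> A Y - X \<bullet> Y\<bar> = \<bar>h (X + Y) - h (X - Y)\<bar>"
    unfolding polar abs_mult by simp
  also have "\<dots> \<le> d * (norm (X + Y))\<^sup>2 + d * (norm (X - Y))\<^sup>2"
    using h abs_triangle_ineq4[of "h (X + Y)" "h (X - Y)"] by linarith
  also have "\<dots> = 2 * (d * ((norm X)\<^sup>2 + (norm Y)\<^sup>2))"
    unfolding power2_norm_eq_inner
    by (simp add: inner_add_left inner_add_right inner_diff_left inner_diff_right inner_commute
        algebra_simps)
  finally show ?thesis by simp
qed

lemma near_isometric_on_inner: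
  fixes A :: "'a::real_inner \<Rightarrow> 'b::real_inner"
  assumes lin: "linear A" and sub: "subspace S" and iso: "near_isometric_on A S d"
    and "X \<in> S" "Y \<in> S"
  shows "\<bar>A X \<bullet> A Y - X \<bullet> Y\<bar> \<le> d * norm X * norm Y"
proof (cases "X = 0 \<or> Y = 0")
  case True
  then show ?thesis using lin by (auto simp: linear_0)
next
  case False
  then have nX: "norm X > 0" and nY: "norm Y > 0" by auto
  let ?X = "(1 / norm X) *\<^sub>R X" and ?Y = "(1 / norm Y) *\<^sub>R Y"
  have "?X \<in> S" "?Y \<in> S" using assms(4,5) sub by (auto simp: subspace_scale)
  from near_isometric_on_polarization[OF lin sub iso this]
  have "\<bar>A ?X \<bullet> A ?Y - ?X \<bullet> ?Y\<bar> \<le> d" using nX nY by simp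
  moreover have "A ?X \<bullet> A ?Y - ?X \<bullet> ?Y = (A X \<bullet> A Y - X \<bullet> Y) / (norm X * norm Y)"
    using lin by (simp add: linear_scale diff_divide_distrib mult.commute)
  ultimately show ?thesis using nX nY by (simp add: abs_divide divide_le_eq mult.assoc)
qed

section \<open>Least squares and the proxy\<close>

lemma le_if_power2_le_mult:
  fixes x c :: real
  assumes "x\<^sup>2 \<le> c * x" "0 \<le> c"
  shows "x \<le> c"
  using assms by (cases "x > 0") (auto simp: power2_eq_square)

lemma least_squares_residual_orthogonal:
  fixes A :: "'a::real_inner \<Rightarrow> 'b::real_inner"
  assumes lin: "linear A" and sub: "subspace S" and "T \<in> S"
    and opt: "\<forall>X\<in>S. norm (b - A T) \<le> norm (b - A X)" and "Z \<in> S"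
  shows "(b - A T) \<bullet> A Z = 0"
proof (cases "A Z = 0")
  case False
  define r where "r = b - A T"
  define c where "c = r \<bullet> A Z"
  define q where "q = (norm (A Z))\<^sup>2"
  have q: "q > 0" using False by (simp add: q_def)
  have "T + (c / q) *\<^sub>R Z \<in> S" using sub assms(3,5) by (simp add: subspace_add subspace_scale)
  then have "norm r \<le> norm (r - (c / q) *\<^sub>R A Z)"
    using opt lin by (auto simp: r_def linear_add linear_scale algebra_simps)
  then have "(norm r)\<^sup>2 \<le> (norm (r - (c / q) *\<^sub>R A Z))\<^sup>2"
    by (simp add: power_mono)
  also have "\<dots> = (norm r)\<^sup>2 - 2 * (c / q) * c + (c / q)\<^sup>2 * q"
    unfolding c_def q_def power2_norm_eq_inner
    by (simp add: inner_diff_left inner_diff_right inner_commute power2_eq_square algebra_simps)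
  also have "\<dots> = (norm r)\<^sup>2 - c\<^sup>2 / q"
    using q by (simp add: power2_eq_square field_simps)
  finally have "c\<^sup>2 / q \<le> 0" by simp
  then show ?thesis using q by (simp add: r_def c_def divide_le_0_iff)
qed simp

text \<open>The proxy \<open>F\<close>, the restriction to \<open>S\<close> of the gradient \<open>E = A\<^sup>* (A D + \<nu>)\<close>,
  approximates \<open>D\<close> up to the distortion of \<open>A\<close> on \<open>S\<close> and the noise.\<close>
lemma proxy_error_le:
  fixes A :: "'a::real_inner \<Rightarrow> 'b::real_inner"
  assumes lin: "linear A" and sub: "subspace S" and iso: "near_isometric_on A S d" and "0 \<le> d"
    and D: "D \<in> S" and F: "F \<in> S" "\<And>Z. Z \<in> S \<Longrightarrow> (E - F) \<bullet> Z = 0"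
    and E: "\<forall>X. X \<bullet> E = A X \<bullet> (A D + \<nu>)"
  shows "norm (F - D) \<le> d * norm D + sqrt (1 + d) * norm \<nu>"
proof -
  let ?e = "F - D"
  have e: "?e \<in> S" using sub D F(1) by (simp add: subspace_diff)
  have orth: "?e \<bullet> (E - F) = 0" using F(2) e inner_commute[of ?e "E - F"] by simp
  have "(norm ?e)\<^sup>2 = ?e \<bullet> E - ?e \<bullet> D - ?e \<bullet> (E - F)"
    by (simp add: power2_norm_eq_inner inner_diff_right)
  also have "\<dots> = ?e \<bullet> E - ?e \<bullet> D" using orth by simp
  also have "\<dots> = (A ?e \<bullet> A D - ?e \<bullet> D) + A ?e \<bullet> \<nu>"
    using E by (simp add: inner_add_right)
  also have "\<dots> \<le> d * norm ?e * norm D + norm (A ?e) * norm \<nu>"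
    using abs_le_D1[OF near_isometric_on_inner[OF lin sub iso e D]] norm_cauchy_schwarz[of "A ?e" \<nu>]
    by linarith
  also have "\<dots> \<le> d * norm ?e * norm D + sqrt (1 + d) * norm ?e * norm \<nu>"
    using near_isometric_on_norm_le[OF iso e] by (simp add: mult_right_mono)
  also have "\<dots> = (d * norm D + sqrt (1 + d) * norm \<nu>) * norm ?e" by (simp add: algebra_simps)
  finally show ?thesis by (rule le_if_power2_le_mult) (use \<open>0 \<le> d\<close> in simp)
qed

text \<open>Splitting \<open>X\<^sub>0 - T\<close> into \<open>X\<^sub>0 - P \<perp> U\<close> and \<open>P - T \<in> U\<close>, the normal equations of the
  least-squares problem bound the second part by the first and the noise.\<close>
lemma least_squares_error_le:
  fixes A :: "'a::real_inner \<Rightarrow> 'b::real_inner"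
  assumes lin: "linear A" and subU: "subspace U" and "U \<subseteq> Q" and subQ: "subspace Q"
    and iso: "near_isometric_on A Q d" and d: "0 \<le> d" "d < 1"
    and T: "T \<in> U" "\<forall>X\<in>U. norm (b - A T) \<le> norm (b - A X)"
    and X0: "X0 \<in> Q" and P: "P \<in> U" "\<And>Z. Z \<in> U \<Longrightarrow> (X0 - P) \<bullet> Z = 0"
  shows "norm (X0 - T) \<le> (norm (X0 - P) + sqrt (1 + d) * norm (b - A X0)) / (1 - d)"
proof -
  define Y where "Y = X0 - P"
  define G where "G = P - T"
  define \<nu> where "\<nu> = b - A X0"
  have G: "G \<in> U" unfolding G_def using subU P(1) T(1) by (simp add: subspace_diff)
  then have GQ: "G \<in> Q" using \<open>U \<subseteq> Q\<close> by blast
  have YQ: "Y \<in> Q" unfolding Y_def using subQ X0 P(1) \<open>U \<subseteq> Q\<close> by (auto simp: subspace_diff)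
  have "(A Y + A G + \<nu>) \<bullet> A G = 0"
    using least_squares_residual_orthogonal[OF lin subU T G]
    by (simp add: Y_def G_def \<nu>_def linear_diff[OF lin] algebra_simps)
  then have AG: "(norm (A G))\<^sup>2 = - (A Y \<bullet> A G) - \<nu> \<bullet> A G"
    by (simp add: power2_norm_eq_inner inner_add_left)
  have "\<bar>A Y \<bullet> A G\<bar> \<le> d * norm Y * norm G"
    using near_isometric_on_inner[OF lin subQ iso YQ GQ] P(2) G by (simp add: Y_def)
  moreover have "\<bar>\<nu> \<bullet> A G\<bar> \<le> sqrt (1 + d) * norm G * norm \<nu>"
    using Cauchy_Schwarz_ineq2[of \<nu> "A G"] near_isometric_on_norm_le[OF iso GQ]
    by (smt (verit) mult.commute mult_left_mono norm_ge_zero)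
  moreover have "(1 - d) * (norm G)\<^sup>2 \<le> (norm (A G))\<^sup>2"
    using iso GQ by (auto simp: near_isometric_on_def abs_le_iff algebra_simps)
  ultimately have "(1 - d) * (norm G)\<^sup>2 \<le> (d * norm Y + sqrt (1 + d) * norm \<nu>) * norm G"
    unfolding AG by (simp add: algebra_simps)
  then have "(norm G)\<^sup>2 \<le> ((d * norm Y + sqrt (1 + d) * norm \<nu>) / (1 - d)) * norm G"
    using d by (simp add: field_simps)
  then have "norm G \<le> (d * norm Y + sqrt (1 + d) * norm \<nu>) / (1 - d)"
    by (rule le_if_power2_le_mult) (use d in simp)
  moreover have "norm (X0 - T) \<le> norm Y + norm G"
    unfolding Y_def G_def using norm_triangle_ineq[of "X0 - P" "P - T"] by simp
  ultimately have "norm (X0 - T) \<le> norm Y + (d * norm Y + sqrt (1 + d) * norm \<nu>) / (1 - d)"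
    by linarith
  also have "\<dots> = (norm Y + sqrt (1 + d) * norm \<nu>) / (1 - d)"
    using d by (simp add: field_simps)
  finally show ?thesis by (simp add: Y_def \<nu>_def)
qed

section \<open>The ADMiRA iteration\<close>

lemma contraction_iterate_le:
  fixes e :: "nat \<Rightarrow> real" and \<rho> c :: real
  assumes "0 \<le> \<rho>" "\<rho> < 1" "0 \<le> c" "\<And>k. e (Suc k) \<le> \<rho> * e k + c"
  shows "e k \<le> \<rho> ^ k * e 0 + c / (1 - \<rho>)"
proof (induction k)
  case (Suc k)
  have "e (Suc k) \<le> \<rho> * (\<rho> ^ k * e 0 + c / (1 - \<rho>)) + c"
    using assms(4)[of k] mult_left_mono[OF Suc.IH assms(1)] by linarith
  also have "\<dots> = \<rho> ^ Suc k * e 0 + c / (1 - \<rho>)"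
    using assms(2) by (simp add: field_simps)
  finally show ?case .
qed (use assms(2,3) in simp)

lemma admira_run_support:
  assumes "admira_run Atoms A b r Xh Ph Pp Pt Xt"
  shows "Ph k \<subseteq> Atoms \<and> finite (Ph k) \<and> card (Ph k) \<le> r \<and> Xh k \<in> cspan (Ph k)"
proof (cases k)
  case 0
  then show ?thesis using assms subspace_0[OF subspace_cspan[of "{}"]] by (simp add: admira_run_def)
next
  case (Suc j)
  then show ?thesis using assms proj_span(1)[of "Ph (Suc j)" "Xt (Suc j)"] by (simp add: admira_run_def)
qed

text \<open>Steps 1 and 2 of an iteration: the merged support \<open>Pt (Suc k)\<close> captures all but a small
  part of \<open>X\<^sub>0\<close>, because the selected atoms capture at least as much of the proxy as the atoms
  of \<open>X\<^sub>0 - Xh k\<close> do.\<close>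
lemma admira_merged_support_error:
  fixes A :: "complex^'n^'m \<Rightarrow> complex^'p"
  assumes lin: "clinear_op A" and rip: "rip_const A (4 * r) \<le> d" and "0 \<le> d"
    and b: "b = A X0 + nu" and atoms: "atom_set Atoms"
    and run: "admira_run Atoms A b r Xh Ph Pp Pt Xt"
    and Psi0: "Psi0 \<subseteq> Atoms" "finite Psi0" "card Psi0 \<le> r" "X0 \<in> cspan Psi0"
  shows "norm (X0 - proj_span (Pt (Suc k)) X0) \<le> 2 * (d * norm (X0 - Xh k) + sqrt (1 + d) * norm nu)"
proof -
  define W where "W = Pp (Suc k)"
  define U where "U = Pt (Suc k)"
  define V where "V = Psi0 \<union> Ph k"
  define Z where "Z = W \<union> V"
  define E where "E = adjoint_op A (b - A (Xh k))"
  define D where "D = X0 - Xh k"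
  have Ph: "Ph k \<subseteq> Atoms" "finite (Ph k)" "card (Ph k) \<le> r" "Xh k \<in> cspan (Ph k)"
    using admira_run_support[OF run] by auto
  have W: "W \<subseteq> Atoms" "finite W" "card W \<le> 2 * r" "U = W \<union> Ph k"
    and W_opt: "\<And>S. S \<subseteq> Atoms \<Longrightarrow> finite S \<Longrightarrow> card S \<le> 2 * r \<Longrightarrow>
                  norm (proj_span S E) \<le> norm (proj_span W E)"
    using run[unfolded admira_run_def, THEN conjunct2, THEN conjunct2, rule_format, of k]
    unfolding W_def U_def E_def by auto
  have V: "V \<subseteq> Atoms" "finite V" "card V \<le> 2 * r"
    unfolding V_def using Psi0 Ph card_Un_le[of Psi0 "Ph k"] by auto
  have Z: "Z \<subseteq> Atoms" "finite Z" "card Z \<le> 4 * r"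
    unfolding Z_def using W V card_Un_le[of W V] by auto
  have finU: "finite U" using W Ph(2) by simp
  have DV: "D \<in> cspan V"
    unfolding D_def using Psi0(4) Ph(4) cspan_mono[of Psi0 V] cspan_mono[of "Ph k" V]
    by (intro subspace_diff[OF subspace_cspan[OF V(2)]]) (auto simp: V_def)
  then have DZ: "D \<in> cspan Z" using cspan_mono[of V Z] by (auto simp: Z_def)
  have "norm (proj_span Z E - D) \<le> d * norm D + sqrt (1 + d) * norm nu"
  proof (rule proxy_error_le[OF clinear_op_linear[OF lin] subspace_cspan[OF Z(2)]
        near_isometric_on_cspan_atoms[OF lin rip atoms Z] \<open>0 \<le> d\<close> DZ proj_span[OF Z(2)]])
    have "b - A (Xh k) = A D + nu"
      using linear_diff[OF clinear_op_linear[OF lin]] by (simp add: D_def b)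
    then show "\<forall>X. X \<bullet> E = A X \<bullet> (A D + nu)"
      using inner_adjoint_op[OF lin] by (simp add: E_def)
  qed
  moreover have "norm (D - proj_span W D) \<le> 2 * norm (proj_span Z E - D)"
    using proj_span_selection_error[OF W(2) V(2) Z(2) _ W_opt[OF V] DV] by (simp add: Z_def)
  moreover have "proj_span W D + Xh k \<in> cspan U"
    using proj_span(1)[OF W(2), of D] Ph(4) cspan_mono[of W U] cspan_mono[of "Ph k" U]
      subspace_cspan[OF finU] W(4) by (auto intro: subspace_add)
  then have "norm (X0 - proj_span U X0) \<le> norm (D - proj_span W D)"
    using proj_span_best_approx[OF finU, of _ X0] by (simp add: D_def algebra_simps)
  ultimately show ?thesis unfolding U_def D_def distrib_left by linarith
qed

text \<open>Steps 3 to 5 of an iteration: least squares on the merged support and pruning to the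
  best \<open>r\<close> atoms each lose at most a constant factor.\<close>
lemma admira_error_step:
  fixes A :: "complex^'n^'m \<Rightarrow> complex^'p"
  assumes lin: "clinear_op A" and rip: "rip_const A (4 * r) \<le> d" and d: "0 \<le> d" "d < 1"
    and b: "b = A X0 + nu" and atoms: "atom_set Atoms" and "rank X0 \<le> r"
    and run: "admira_run Atoms A b r Xh Ph Pp Pt Xt"
  shows "norm (X0 - Xh (Suc k)) \<le> (4 * d * norm (X0 - Xh k) + 6 * sqrt (1 + d) * norm nu) / (1 - d)"
proof -
  obtain Psi0 where Psi0: "Psi0 \<subseteq> Atoms" "finite Psi0" "card Psi0 \<le> r" "X0 \<in> cspan Psi0"
    using low_rank_in_cspan_atoms[OF atoms \<open>rank X0 \<le> r\<close>] by blast
  define U where "U = Pt (Suc k)"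
  define Z where "Z = Psi0 \<union> U"
  define T where "T = Xt (Suc k)"
  define H where "H = Ph (Suc k)"
  have Ph: "Ph k \<subseteq> Atoms" "finite (Ph k)" "card (Ph k) \<le> r"
    using admira_run_support[OF run] by auto
  have U: "U \<subseteq> Atoms" "finite U" "card U \<le> 3 * r"
    and T: "T \<in> cspan U" "\<forall>X\<in>cspan U. norm (b - A T) \<le> norm (b - A X)"
    and H: "finite H" "\<And>S. S \<subseteq> Atoms \<Longrightarrow> finite S \<Longrightarrow> card S \<le> r \<Longrightarrow>
                  norm (proj_span S T) \<le> norm (proj_span H T)"
    and Xh: "Xh (Suc k) = proj_span H T"
    using run[unfolded admira_run_def, THEN conjunct2, THEN conjunct2, rule_format, of k]
      Ph card_Un_le[of "Pp (Suc k)" "Ph k"]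
    unfolding U_def T_def H_def by auto
  have Z: "Z \<subseteq> Atoms" "finite Z" "card Z \<le> 4 * r"
    unfolding Z_def using Psi0 U card_Un_le[of Psi0 U] by auto
  have "norm (X0 - T) \<le> (norm (X0 - proj_span U X0) + sqrt (1 + d) * norm nu) / (1 - d)"
    using least_squares_error_le[OF clinear_op_linear[OF lin] subspace_cspan[OF U(2)]
        cspan_mono subspace_cspan[OF Z(2)] near_isometric_on_cspan_atoms[OF lin rip atoms Z] d T
        _ proj_span[OF U(2)], of X0] Psi0(4) cspan_mono[of Psi0 Z]
    by (auto simp: Z_def b)
  also have "\<dots> \<le> (2 * (d * norm (X0 - Xh k) + sqrt (1 + d) * norm nu) + sqrt (1 + d) * norm nu) / (1 - d)"
    using admira_merged_support_error[OF lin rip d(1) b atoms run Psi0, of k] d(2)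
    by (intro divide_right_mono) (simp_all add: U_def algebra_simps)
  finally have "norm (X0 - T) \<le> \<dots>" .
  moreover have "norm (X0 - Xh (Suc k)) \<le> 2 * norm (X0 - T)"
    unfolding Xh using proj_span_pruning_error[OF H(1) Psi0(2) H(2)[OF Psi0(1-3)] Psi0(4)] .
  ultimately have "norm (X0 - Xh (Suc k))
      \<le> 2 * ((2 * (d * norm (X0 - Xh k) + sqrt (1 + d) * norm nu) + sqrt (1 + d) * norm nu) / (1 - d))"
    by linarith
  then show ?thesis by (simp add: add_divide_distrib ac_simps)
qed

theorem theorem3:
  fixes A :: "complex^'n^'m \<Rightarrow> complex^'p"
    and Atoms :: "(complex^'n^'m) set"
    and X0 :: "complex^'n^'m"
    and nu b :: "complex^'p"
    and r :: nat
    and Xh Xt :: "nat \<Rightarrow> complex^'n^'m"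
    and Ph Pp Pt :: "nat \<Rightarrow> (complex^'n^'m) set"
  assumes "r \<ge> 1"
    and "clinear_op A"
    and "rip_const A (4 * r) \<le> 0.04"
    and "rank X0 \<le> r"
    and "b = A X0 + nu"
    and "atom_set Atoms"
    and "admira_run Atoms A b r Xh Ph Pp Pt Xt"
  shows "(\<forall>k. norm (X0 - Xh (Suc k)) \<le> 0.5 * norm (X0 - Xh k) + 6.5 * norm nu) \<and>
         (\<forall>k. norm (X0 - Xh k) \<le> (1/2) ^ k * norm X0 + 13 * norm nu)"
proof -
  have sqrt: "sqrt (1 + 0.04) \<le> (1.02 :: real)" by (rule real_le_lsqrt) (simp_all add: power2_eq_square)
  have step: "norm (X0 - Xh (Suc k)) \<le> 0.5 * norm (X0 - Xh k) + 6.5 * norm nu" for k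
  proof -
    have "norm (X0 - Xh (Suc k))
          \<le> (4 * 0.04 * norm (X0 - Xh k) + 6 * sqrt (1 + 0.04) * norm nu) / (1 - 0.04)"
      by (rule admira_error_step[OF assms(2,3) _ _ assms(5,6,4,7)]) simp_all
    also have "\<dots> \<le> 0.5 * norm (X0 - Xh k) + 6.5 * norm nu"
      using mult_right_mono[OF sqrt norm_ge_zero[of nu]]
      by simp (use norm_ge_zero[of "X0 - Xh k"] norm_ge_zero[of nu] in linarith)
    finally show ?thesis .
  qed
  moreover have "norm (X0 - Xh k) \<le> (1/2) ^ k * norm X0 + 13 * norm nu" for k
    using contraction_iterate_le[of "1/2" "6.5 * norm nu" "\<lambda>k. norm (X0 - Xh k)"] step assms(7)
    by (simp add: admira_run_def)
  ultimately show ?thesis by blast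
qed

end
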